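(* Consider the fixed $p$-processor cup game or the variable-processor cup game, in the non-negative-fill version, where the emptier has $\varepsilon$ resource augmentation ($\varepsilon>0$). Then for every state $A$ and every game length $t\ge0$, $\operatorname{GREEDY}(A,t)=\operatorname{OPT}(A,t)$.
   Context: A state is a multiset of $n$ real nonnegative fills. In each round the filler chooses an integer $1\le p\le n$ (fixed $p$ in the $p$-processor game) and reals $a_i\in[0,1]$ with $\sum a_i=p$ and adds $a_i$ to cup $i$; then the emptier chooses $p$ distinct cups and replaces each of their fills $x$ by $\max(0,x-(1+\varepsilon))$. Backlog = maximum fill. $\operatorname{OPT}(S,0)$ is the backlog of $S$ and $\operatorname{OPT}(S,t)=\sup_{S'}\min_{S''}\operatorname{OPT}(S'',t-1)$ with $S'$ over states reachable from $S$ by a filler move and $S''$ over states reachable from $S'$ by an emptier move. $\operatorname{GREEDY}(S,t)$ is the supremum backlog a filler can achieve after $t$ rounds from $S$ when the emptier always empties the $p$ fullest cups. *)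

theory Defs
  imports Complex_Main
begin

text \<open>A state of the cup game on n cups is a list of n fills (indexed cups;
  the game is symmetric, so this represents the multiset of fills).\<close>

definition backlog :: "real list \<Rightarrow> real" where
  "backlog S = Max (set S)"

definition filler_move :: "nat \<Rightarrow> real list \<Rightarrow> real list \<Rightarrow> bool" where
  "filler_move p S a \<longleftrightarrow> length a = length S \<and> (\<forall>x\<in>set a. 0 \<le> x \<and> x \<le> 1)
     \<and> sum_list a = real p"

definition fill :: "real list \<Rightarrow> real list \<Rightarrow> real list" where
  "fill S a = map2 (+) S a"

definition emptier_move :: "nat \<Rightarrow> real list \<Rightarrow> nat set \<Rightarrow> bool" where
  "emptier_move p S E \<longleftrightarrow> E \<subseteq> {..<length S} \<and> card E = p"

definition empty_cups :: "real \<Rightarrow> nat set \<Rightarrow> real list \<Rightarrow> real list" where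
  "empty_cups \<epsilon> E S =
     map (\<lambda>i. if i \<in> E then max 0 (S ! i - (1 + \<epsilon>)) else S ! i) [0..<length S]"

definition greedy_move :: "nat \<Rightarrow> real list \<Rightarrow> nat set \<Rightarrow> bool" where
  "greedy_move p S E \<longleftrightarrow> emptier_move p S E \<and>
     (\<forall>i\<in>E. \<forall>j<length S. j \<notin> E \<longrightarrow> S ! j \<le> S ! i)"

text \<open>Ps is the set of processor counts the filler may choose each round:
  {p} for the fixed p-processor game, {1..n} for the variable-processor game.\<close>
fun OPT :: "nat set \<Rightarrow> real \<Rightarrow> real list \<Rightarrow> nat \<Rightarrow> real" where
  "OPT Ps \<epsilon> S 0 = backlog S"
| "OPT Ps \<epsilon> S (Suc t) =
    (SUP pa \<in> {(p, a). p \<in> Ps \<and> filler_move p S a}.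
       INF E \<in> {E. emptier_move (fst pa) (fill S (snd pa)) E}.
         OPT Ps \<epsilon> (empty_cups \<epsilon> E (fill S (snd pa))) t)"

fun GREEDY :: "nat set \<Rightarrow> real \<Rightarrow> real list \<Rightarrow> nat \<Rightarrow> real" where
  "GREEDY Ps \<epsilon> S 0 = backlog S"
| "GREEDY Ps \<epsilon> S (Suc t) =
    (SUP pa \<in> {(p, a). p \<in> Ps \<and> filler_move p S a}.
       INF E \<in> {E. greedy_move (fst pa) (fill S (snd pa)) E}.
         GREEDY Ps \<epsilon> (empty_cups \<epsilon> E (fill S (snd pa))) t)"

end

theory Submission
  imports Defs "HOL-Combinatorics.Permutations"
begin

text \<open>Call a state \<open>L\<close> dominated by \<open>R\<close> if \<open>L\<close> arises from \<open>R\<close> by a chain of elementary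
  steps: lowering fills entrywise, permuting the cups, or moving an integer multiple of
  \<open>1 + \<epsilon>\<close> of fill from one cup to a less full one without letting the two cross. Dominance
  survives a round of the game: every filler move on \<open>L\<close> can be matched by one on \<open>R\<close> such
  that every emptier reply on \<open>R\<close> can be answered on \<open>L\<close> with dominance preserved; hence
  \<open>OPT\<close> is monotone under dominance. Exchanging an emptied cup for a fuller unemptied one
  yields a dominated state, so by repeated exchanges the greedy emptier's result is dominated by
  the result of any other choice. The greedy emptier is therefore optimal in every round, and \<open>GREEDY = OPT\<close>
  follows by induction on the number of rounds.\<close>

abbreviation nonneg :: "real list \<Rightarrow> bool" where
  "nonneg S \<equiv> \<forall>x\<in>set S. 0 \<le> x"

lemma length_fill [simp]: "length a = length S \<Longrightarrow> length (fill S a) = length S"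
  by (simp add: fill_def)

lemma nth_fill: "i < length S \<Longrightarrow> length a = length S \<Longrightarrow> fill S a ! i = S ! i + a ! i"
  by (simp add: fill_def)

lemma length_empty_cups [simp]: "length (empty_cups \<epsilon> E S) = length S"
  by (simp add: empty_cups_def)

lemma nth_empty_cups:
  "i < length S \<Longrightarrow> empty_cups \<epsilon> E S ! i = (if i \<in> E then max 0 (S ! i - (1 + \<epsilon>)) else S ! i)"
  by (simp add: empty_cups_def)

lemma filler_move_length: "filler_move p S a \<Longrightarrow> length a = length S"
  by (simp add: filler_move_def)

lemma filler_move_nth: "filler_move p S a \<Longrightarrow> i < length S \<Longrightarrow> 0 \<le> a ! i \<and> a ! i \<le> 1"
  unfolding filler_move_def by (metis nth_mem)

lemma filler_move_cong_length: "length S = length S' \<Longrightarrow> filler_move p S a \<longleftrightarrow> filler_move p S' a"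
  by (simp add: filler_move_def)

lemma emptier_move_cong_length: "length S = length S' \<Longrightarrow> emptier_move p S E \<longleftrightarrow> emptier_move p S' E"
  by (simp add: emptier_move_def)

lemma filler_move_le_length:
  assumes "filler_move p S a"
  shows "p \<le> length S"
proof -
  have "real p = (\<Sum>x\<leftarrow>a. x)" using assms by (simp add: filler_move_def)
  also have "\<dots> \<le> (\<Sum>x\<leftarrow>a. 1)" using assms by (intro sum_list_mono) (simp add: filler_move_def)
  also have "\<dots> = real (length S)" using assms by (simp add: filler_move_def sum_list_triv)
  finally show ?thesis by simp
qed

lemma emptier_move_exists: "p \<le> length S \<Longrightarrow> \<exists>E. emptier_move p S E"
  by (rule exI[of _ "{..<p}"]) (auto simp: emptier_move_def)

lemma finite_emptier_moves: "finite {E. emptier_move p S E}"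
  by (rule finite_subset[of _ "Pow {..<length S}"]) (auto simp: emptier_move_def)

lemma nonneg_fill: "nonneg S \<Longrightarrow> filler_move p S a \<Longrightarrow> nonneg (fill S a)"
  by (auto simp: in_set_conv_nth nth_fill filler_move_length dest: filler_move_nth)
    (metis add_nonneg_nonneg filler_move_nth nth_mem)

lemma nonneg_empty_cups: "nonneg S \<Longrightarrow> nonneg (empty_cups \<epsilon> E S)"
  by (auto simp: in_set_conv_nth nth_empty_cups) (metis nth_mem)

lemma nth_le_backlog: "i < length S \<Longrightarrow> S ! i \<le> backlog S"
  by (simp add: backlog_def)

lemma backlog_le: "S \<noteq> [] \<Longrightarrow> (\<And>i. i < length S \<Longrightarrow> S ! i \<le> M) \<Longrightarrow> backlog S \<le> M"
  unfolding backlog_def by (subst Max_le_iff) (auto simp: in_set_conv_nth)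

lemma backlog_le_backlog:
  assumes "length L = length R" "\<And>i. i < length L \<Longrightarrow> \<exists>j<length R. L ! i \<le> R ! j"
  shows "backlog L \<le> backlog R"
proof (cases "L = []")
  case False
  show ?thesis
  proof (rule backlog_le[OF False])
    fix i assume "i < length L"
    then show "L ! i \<le> backlog R" using assms(2) nth_le_backlog by (meson order_trans)
  qed
qed (use assms(1) in simp)

section \<open>Dominance between states\<close>

definition transfer_fill :: "nat \<Rightarrow> nat \<Rightarrow> real \<Rightarrow> real list \<Rightarrow> real list" where
  "transfer_fill g e \<kappa> S = S[g := S ! g - \<kappa>, e := S ! e + \<kappa>]"

lemma length_transfer_fill [simp]: "length (transfer_fill g e \<kappa> S) = length S"
  by (simp add: transfer_fill_def)

lemma nth_transfer_fill:
  "g < length S \<Longrightarrow> e < length S \<Longrightarrow> g \<noteq> e \<Longrightarrow> i < length S \<Longrightarrow>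
   transfer_fill g e \<kappa> S ! i = (if i = g then S ! g - \<kappa> else if i = e then S ! e + \<kappa> else S ! i)"
  by (simp add: transfer_fill_def nth_list_update)

lemma sum_list_list_update:
  fixes xs :: "'a::ab_group_add list"
  shows "k < length xs \<Longrightarrow> sum_list (xs[k := x]) = sum_list xs + x - xs ! k"
  by (induction xs arbitrary: k) (auto split: nat.split)

lemma sum_list_transfer_fill:
  "g < length S \<Longrightarrow> e < length S \<Longrightarrow> g \<noteq> e \<Longrightarrow> sum_list (transfer_fill g e \<kappa> S) = sum_list S"
  by (simp add: transfer_fill_def sum_list_list_update nth_list_update)

text \<open>Transfers are restricted to multiples of \<open>1 + \<epsilon>\<close> because emptying exactly one of the two
  cups involved changes the transferred amount by \<open>1 + \<epsilon>\<close>. The lower bound \<open>0 \<le> x\<close> keeps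
  every state dominated by a nonnegative state nonnegative.\<close>
inductive dominated_step :: "real \<Rightarrow> real list \<Rightarrow> real list \<Rightarrow> bool" for \<epsilon> where
  entrywise_le: "list_all2 (\<lambda>x y. 0 \<le> x \<and> x \<le> y) L R \<Longrightarrow> dominated_step \<epsilon> L R"
| permute: "\<sigma> permutes {..<length R} \<Longrightarrow> dominated_step \<epsilon> (permute_list \<sigma> R) R"
| transfer: "g < length R \<Longrightarrow> e < length R \<Longrightarrow> g \<noteq> e \<Longrightarrow> real k * (1 + \<epsilon>) \<le> R ! g - R ! e \<Longrightarrow>
    dominated_step \<epsilon> (transfer_fill g e (real k * (1 + \<epsilon>)) R) R"

abbreviation dominated :: "real \<Rightarrow> real list \<Rightarrow> real list \<Rightarrow> bool" where
  "dominated \<epsilon> \<equiv> (dominated_step \<epsilon>)\<^sup>*\<^sup>*"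

lemma dominated_step_length: "dominated_step \<epsilon> L R \<Longrightarrow> length L = length R"
  by (induction rule: dominated_step.cases) (auto dest: list_all2_lengthD)

lemma dominated_step_nonneg:
  assumes "dominated_step \<epsilon> L R" "nonneg R" "0 \<le> \<epsilon>"
  shows "nonneg L"
  using assms
proof (induction rule: dominated_step.induct)
  case (entrywise_le L R)
  then show ?case by (auto simp: list_all2_conv_all_nth in_set_conv_nth)
next
  case (transfer g R e k)
  have "0 \<le> R ! e" using transfer.hyps(2) transfer.prems(1) by simp
  then show ?case using transfer by (auto simp: in_set_conv_nth nth_transfer_fill) (metis nth_mem)
qed simp

lemma backlog_mono_dominated_step:
  assumes "dominated_step \<epsilon> L R" "0 \<le> \<epsilon>"
  shows "backlog L \<le> backlog R"
  using assms
proof (induction rule: dominated_step.induct)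
  case (entrywise_le L R)
  then show ?case by (intro backlog_le_backlog) (auto simp: list_all2_conv_all_nth)
next
  case (permute \<sigma> R)
  then show ?case by (simp add: backlog_def)
next
  case (transfer g R e k)
  have "0 \<le> real k * (1 + \<epsilon>)" using transfer.prems by simp
  then have bound: "transfer_fill g e (real k * (1 + \<epsilon>)) R ! i \<le> R ! (if i = e then g else i)"
    if "i < length R" for i
    using that transfer.hyps by (auto simp: nth_transfer_fill)
  show ?case
  proof (rule backlog_le_backlog)
    fix i assume "i < length (transfer_fill g e (real k * (1 + \<epsilon>)) R)"
    then show "\<exists>j<length R. transfer_fill g e (real k * (1 + \<epsilon>)) R ! i \<le> R ! j"
      using transfer.hyps by (intro exI[of _ "if i = e then g else i"]) (simp add: bound)
  qed simp
qed

lemma mono_dominated_if_mono_dominated_step: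
  assumes mono: "\<And>L R. dominated_step \<epsilon> L R \<Longrightarrow> nonneg R \<Longrightarrow> f L \<le> f R"
    and "dominated \<epsilon> L R" "nonneg R" "0 \<le> \<epsilon>"
  shows "f L \<le> (f R :: real)"
  using assms(2,3)
proof (induction rule: rtranclp_induct)
  case (step Y Z)
  then have "nonneg Y" using dominated_step_nonneg \<open>0 \<le> \<epsilon>\<close> by blast
  then show ?case using step mono by (meson order_trans)
qed simp

definition two_cup_dominated :: "real \<Rightarrow> real \<Rightarrow> real \<Rightarrow> real \<Rightarrow> real \<Rightarrow> bool" where
  "two_cup_dominated C x\<^sub>1 x\<^sub>2 y\<^sub>1 y\<^sub>2 \<longleftrightarrow> (x\<^sub>1 \<le> y\<^sub>2 \<and> x\<^sub>2 \<le> y\<^sub>1) \<or>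
     (\<exists>j::nat. real j * C \<le> y\<^sub>1 - y\<^sub>2 \<and> x\<^sub>1 \<le> y\<^sub>1 - real j * C \<and> x\<^sub>2 \<le> y\<^sub>2 + real j * C)"

lemma dominated_if_two_cup_dominated:
  assumes len: "length X = length Y" and ge: "g < length Y" "e < length Y" "g \<noteq> e"
    and nonneg: "nonneg X" and off: "\<And>i. i < length Y \<Longrightarrow> i \<noteq> g \<Longrightarrow> i \<noteq> e \<Longrightarrow> X ! i \<le> Y ! i"
    and two: "two_cup_dominated (1 + \<epsilon>) (X ! g) (X ! e) (Y ! g) (Y ! e)"
  shows "dominated \<epsilon> X Y"
proof -
  have le_step: "dominated_step \<epsilon> X Z" if "length Z = length Y" "\<And>i. i < length Y \<Longrightarrow> X ! i \<le> Z ! i" for Z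
    using that len nonneg by (intro dominated_step.entrywise_le) (auto simp: list_all2_conv_all_nth)
  from two consider "X ! g \<le> Y ! e" "X ! e \<le> Y ! g"
    | j :: nat where "real j * (1 + \<epsilon>) \<le> Y ! g - Y ! e"
        "X ! g \<le> Y ! g - real j * (1 + \<epsilon>)" "X ! e \<le> Y ! e + real j * (1 + \<epsilon>)"
    unfolding two_cup_dominated_def by blast
  then show ?thesis
  proof cases
    case 1
    let ?\<tau> = "Transposition.transpose g e"
    have \<tau>: "?\<tau> permutes {..<length Y}" using ge by (intro permutes_swap_id) auto
    have "dominated_step \<epsilon> X (permute_list ?\<tau> Y)"
      using 1 off ge by (intro le_step) (auto simp: permute_list_nth[OF \<tau>] Transposition.transpose_def)
    then show ?thesis using dominated_step.permute[OF \<tau>] by (meson converse_rtranclp_into_rtranclp r_into_rtranclp)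
  next
    case 2
    have "dominated_step \<epsilon> X (transfer_fill g e (real j * (1 + \<epsilon>)) Y)"
      using 2 off ge by (intro le_step) (auto simp: nth_transfer_fill)
    then show ?thesis using dominated_step.transfer[OF ge 2(1)]
      by (meson converse_rtranclp_into_rtranclp r_into_rtranclp)
  qed
qed

lemma two_cup_dominated_exchange:
  assumes "0 \<le> C" "y\<^sub>2 \<le> y\<^sub>1"
  shows "two_cup_dominated C (max 0 (y\<^sub>1 - C)) y\<^sub>2 y\<^sub>1 (max 0 (y\<^sub>2 - C))"
proof (cases "y\<^sub>1 < C")
  case True
  then show ?thesis using assms unfolding two_cup_dominated_def by auto
next
  case False
  then show ?thesis using assms unfolding two_cup_dominated_def by (intro disjI2 exI[of _ 1]) auto
qed

text \<open>\<open>b\<^sub>1\<close> and \<open>b\<^sub>2\<close> tell whether the first and the second cup are emptied on the dominating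
  side; the dominated side empties the cups in mirrored roles.\<close>
lemma two_cup_dominated_transfer:
  assumes C: "0 \<le> C" and k: "1 \<le> k" and gap: "real k * C \<le> y\<^sub>1 - y\<^sub>2" and y\<^sub>2: "0 \<le> y\<^sub>2"
  defines "trunc x \<equiv> max 0 (x - C)"
  shows "two_cup_dominated C
    (if b\<^sub>2 then trunc (y\<^sub>1 - real k * C) else y\<^sub>1 - real k * C)
    (if b\<^sub>1 then trunc (y\<^sub>2 + real k * C) else y\<^sub>2 + real k * C)
    (if b\<^sub>1 then trunc y\<^sub>1 else y\<^sub>1)
    (if b\<^sub>2 then trunc y\<^sub>2 else y\<^sub>2)"
proof -
  define \<kappa> where "\<kappa> = real k * C"
  have \<kappa>C: "C \<le> \<kappa>" using k C by (simp add: \<kappa>_def mult_le_cancel_right1)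
  have shift: "real (k - 1) * C = \<kappa> - C" "real (k + 1) * C = \<kappa> + C"
    using k by (auto simp: \<kappa>_def of_nat_diff algebra_simps)
  have transfer: "two_cup_dominated C x\<^sub>1 x\<^sub>2 z\<^sub>1 z\<^sub>2"
    if "real j * C \<le> z\<^sub>1 - z\<^sub>2" "x\<^sub>1 \<le> z\<^sub>1 - real j * C" "x\<^sub>2 \<le> z\<^sub>2 + real j * C" for j x\<^sub>1 x\<^sub>2 z\<^sub>1 z\<^sub>2
    using that unfolding two_cup_dominated_def by blast
  have swap: "two_cup_dominated C x\<^sub>1 x\<^sub>2 z\<^sub>1 z\<^sub>2" if "x\<^sub>1 \<le> z\<^sub>2" "x\<^sub>2 \<le> z\<^sub>1" for x\<^sub>1 x\<^sub>2 z\<^sub>1 z\<^sub>2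
    using that unfolding two_cup_dominated_def by blast
  show ?thesis
  proof (cases b\<^sub>1; cases b\<^sub>2)
    assume "b\<^sub>1" "b\<^sub>2"
    show ?thesis
    proof (cases "y\<^sub>2 < C \<and> y\<^sub>1 - \<kappa> < C")
      case True
      then show ?thesis using \<open>b\<^sub>1\<close> \<open>b\<^sub>2\<close> gap y\<^sub>2 by (intro swap) (auto simp: trunc_def \<kappa>_def)
    next
      case False
      then show ?thesis using \<open>b\<^sub>1\<close> \<open>b\<^sub>2\<close> gap y\<^sub>2 \<kappa>C
        by (intro transfer[of k]) (auto simp: trunc_def \<kappa>_def[symmetric])
    qed
  next
    assume "b\<^sub>1" "\<not> b\<^sub>2"
    then show ?thesis using gap y\<^sub>2 \<kappa>C
      by (intro transfer[of "k - 1", unfolded shift]) (auto simp: trunc_def \<kappa>_def[symmetric])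
  next
    assume "\<not> b\<^sub>1" "b\<^sub>2"
    show ?thesis
    proof (cases "y\<^sub>1 - \<kappa> < C")
      case True
      then show ?thesis using \<open>\<not> b\<^sub>1\<close> \<open>b\<^sub>2\<close> gap y\<^sub>2 by (intro swap) (auto simp: trunc_def \<kappa>_def)
    next
      case False
      then show ?thesis using \<open>\<not> b\<^sub>1\<close> \<open>b\<^sub>2\<close> gap y\<^sub>2 \<kappa>C
        by (intro transfer[of "k + 1", unfolded shift]) (auto simp: trunc_def \<kappa>_def[symmetric])
    qed
  next
    assume "\<not> b\<^sub>1" "\<not> b\<^sub>2"
    then show ?thesis using gap by (intro transfer[of k]) auto
  qed
qed

section \<open>One round preserves dominance\<close>

lemma fill_permute_list:
  assumes \<sigma>: "\<sigma> permutes {..<length R}" and len: "length a = length R"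
  shows "fill (permute_list \<sigma> R) a = permute_list \<sigma> (fill R (permute_list (inv \<sigma>) a))"
proof (rule nth_equalityI)
  have \<sigma>': "inv \<sigma> permutes {..<length a}" using \<sigma> len by (simp add: permutes_inv)
  fix i assume "i < length (fill (permute_list \<sigma> R) a)"
  then have i: "i < length R" using len by simp
  then have "\<sigma> i < length R" using permutes_in_image[OF \<sigma>] by simp
  then show "fill (permute_list \<sigma> R) a ! i = permute_list \<sigma> (fill R (permute_list (inv \<sigma>) a)) ! i"
    using i len by (simp add: nth_fill permute_list_nth[OF \<sigma>] permute_list_nth[OF \<sigma>']
        permute_list_nth[of \<sigma> "fill R _"] \<sigma> permutes_inverses(2)[OF \<sigma>])
qed (use len in simp)

lemma filler_move_permute_list:
  assumes "\<sigma> permutes {..<length S}" "filler_move p S a"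
  shows "filler_move p S (permute_list \<sigma> a)"
proof -
  have "mset (permute_list \<sigma> a) = mset a" using assms by (simp add: filler_move_length)
  then show ?thesis using assms(2) unfolding filler_move_def
    by (metis length_permute_list mset_eq_setD sum_mset_sum_list)
qed

lemma emptier_move_image_permutes:
  assumes "\<sigma> permutes {..<length S}" "emptier_move p S E"
  shows "emptier_move p S (\<sigma> ` E)"
  using assms permutes_inj[OF assms(1)] permutes_image[OF assms(1)]
  by (auto simp: emptier_move_def card_image inj_on_subset)

lemma empty_cups_permute_list:
  assumes \<sigma>: "\<sigma> permutes {..<length Y}"
  shows "empty_cups \<epsilon> (inv \<sigma> ` E) (permute_list \<sigma> Y) = permute_list \<sigma> (empty_cups \<epsilon> E Y)"
proof (rule nth_equalityI)
  fix i assume "i < length (empty_cups \<epsilon> (inv \<sigma> ` E) (permute_list \<sigma> Y))"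
  then have i: "i < length Y" by simp
  have "i \<in> inv \<sigma> ` E \<longleftrightarrow> \<sigma> i \<in> E"
    by (metis \<sigma> image_iff permutes_inverses)
  then show "empty_cups \<epsilon> (inv \<sigma> ` E) (permute_list \<sigma> Y) ! i = permute_list \<sigma> (empty_cups \<epsilon> E Y) ! i"
    using i permutes_in_image[OF \<sigma>]
    by (simp add: nth_empty_cups permute_list_nth[OF \<sigma>] permute_list_nth[of \<sigma> "empty_cups \<epsilon> E Y"] \<sigma>)
qed simp

lemma fill_transfer_fill:
  assumes "g < length R" "e < length R" "g \<noteq> e" "length a = length R"
  shows "fill (transfer_fill g e \<kappa> R) a = transfer_fill g e \<kappa> (fill R a)"
  using assms by (intro nth_equalityI) (auto simp: nth_fill nth_transfer_fill)

text \<open>If the filler's move breaks the gap condition of the transfer, \<open>R\<close> is filled instead with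
  the amounts for the two cups exchanged and shifted by the remaining gap, which makes the two
  filled states mirror images of each other.\<close>
lemma filler_move_transfer_fill:
  assumes ge: "g < length R" "e < length R" "g \<noteq> e" and gap: "\<kappa> \<le> R ! g - R ! e"
    and fm: "filler_move p (transfer_fill g e \<kappa> R) a"
  obtains "filler_move p R a" "\<kappa> \<le> fill R a ! g - fill R a ! e"
  | a' where "filler_move p R a'"
      "fill (transfer_fill g e \<kappa> R) a = permute_list (Transposition.transpose g e) (fill R a')"
proof -
  have la: "length a = length R" using fm by (simp add: filler_move_length)
  have fmR: "filler_move p R a" using fm filler_move_cong_length[of "transfer_fill g e \<kappa> R" R] by simp
  define D where "D = R ! g - R ! e - \<kappa>"
  have a_bounds: "0 \<le> a ! g" "a ! g \<le> 1" "0 \<le> a ! e" "a ! e \<le> 1"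
    using filler_move_nth[OF fmR] ge by auto
  show thesis
  proof (cases "a ! e \<le> a ! g + D")
    case True
    then show thesis using that(1) fmR ge la by (simp add: nth_fill D_def)
  next
    case False
    define a' where "a' = transfer_fill g e (a ! g + D - a ! e) a"
    let ?\<tau> = "Transposition.transpose g e"
    have la': "length a' = length R" using la by (simp add: a'_def)
    have nth_a': "a' ! i = (if i = g then a ! e - D else if i = e then a ! g + D else a ! i)"
      if "i < length R" for i
      using that ge la by (simp add: a'_def nth_transfer_fill)
    have "0 \<le> D" using gap by (simp add: D_def)
    then have "0 \<le> a' ! i \<and> a' ! i \<le> 1" if "i < length R" for i
      using that False a_bounds filler_move_nth[OF fmR that] by (auto simp: nth_a')
    then have "\<forall>x\<in>set a'. 0 \<le> x \<and> x \<le> 1" using la' by (metis in_set_conv_nth)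
    moreover have "sum_list a' = sum_list a" using ge la by (simp add: a'_def sum_list_transfer_fill)
    ultimately have "filler_move p R a'" using fmR la' by (simp add: filler_move_def)
    moreover have "fill (transfer_fill g e \<kappa> R) a = permute_list ?\<tau> (fill R a')"
    proof (rule nth_equalityI)
      have \<tau>: "?\<tau> permutes {..<length (fill R a')}" using ge la' by (intro permutes_swap_id) auto
      fix i assume "i < length (fill (transfer_fill g e \<kappa> R) a)"
      then have "i < length R" using la by simp
      moreover have "?\<tau> i < length R" using \<open>i < length R\<close> ge
        by (simp add: Transposition.transpose_def)
      ultimately show "fill (transfer_fill g e \<kappa> R) a ! i = permute_list ?\<tau> (fill R a') ! i"
        using ge la la' by (auto simp: permute_list_nth[OF \<tau>] nth_fill nth_transfer_fill nth_a' D_def)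
    qed (use la la' in simp)
    ultimately show thesis using that(2) by blast
  qed
qed

lemma dominated_step_fill:
  assumes "dominated_step \<epsilon> L R" "filler_move p L a"
  shows "\<exists>a'. filler_move p R a' \<and> dominated_step \<epsilon> (fill L a) (fill R a')"
  using assms
proof (induction rule: dominated_step.induct)
  case (entrywise_le L R)
  have "length a = length R" using entrywise_le by (auto simp: filler_move_length dest: list_all2_lengthD)
  then have "list_all2 (\<lambda>x y. 0 \<le> x \<and> x \<le> y) (fill L a) (fill R a)"
    using entrywise_le filler_move_nth[OF entrywise_le.prems]
    by (fastforce simp: list_all2_conv_all_nth nth_fill)
  moreover have "filler_move p R a"
    using entrywise_le filler_move_cong_length[of L R] by (auto dest: list_all2_lengthD)
  ultimately show ?case by (blast intro: dominated_step.entrywise_le)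
next
  case (permute \<sigma> R)
  have \<sigma>: "\<sigma> permutes {..<length (fill R (permute_list (inv \<sigma>) a))}"
    using permute by (simp add: filler_move_length)
  have "filler_move p R (permute_list (inv \<sigma>) a)"
    using permute filler_move_cong_length[of "permute_list \<sigma> R" R]
    by (intro filler_move_permute_list) (simp_all add: permutes_inv)
  moreover have "fill (permute_list \<sigma> R) a = permute_list \<sigma> (fill R (permute_list (inv \<sigma>) a))"
    using permute by (intro fill_permute_list) (simp_all add: filler_move_length)
  ultimately show ?case using dominated_step.permute[OF \<sigma>] by metis
next
  case (transfer g R e k)
  then show ?case
  proof (cases rule: filler_move_transfer_fill)
    case 1
    have la: "length a = length R" using 1(1) by (rule filler_move_length)
    have "dominated_step \<epsilon> (transfer_fill g e (real k * (1 + \<epsilon>)) (fill R a)) (fill R a)"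
      using transfer.hyps 1(2) la by (intro dominated_step.transfer) simp_all
    then show ?thesis using 1(1) transfer.hyps la by (auto simp: fill_transfer_fill)
  next
    case (2 a')
    have "Transposition.transpose g e permutes {..<length (fill R a')}"
      using transfer.hyps 2(1) by (intro permutes_swap_id) (simp_all add: filler_move_length)
    then show ?thesis using 2 dominated_step.permute by metis
  qed
qed

lemma transfer_fill_empty_cups:
  assumes ge: "g < length Y" "e < length Y" "g \<noteq> e" and k: "1 \<le> k"
    and gap: "real k * (1 + \<epsilon>) \<le> Y ! g - Y ! e" and Y: "nonneg Y" and \<epsilon>: "0 \<le> \<epsilon>"
  defines "\<tau> \<equiv> Transposition.transpose g e"
  shows "dominated \<epsilon> (empty_cups \<epsilon> (\<tau> ` E) (transfer_fill g e (real k * (1 + \<epsilon>)) Y)) (empty_cups \<epsilon> E Y)"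
proof (rule dominated_if_two_cup_dominated)
  let ?X = "transfer_fill g e (real k * (1 + \<epsilon>)) Y"
  have mem: "i \<in> \<tau> ` E \<longleftrightarrow> \<tau> i \<in> E" for i
    unfolding \<tau>_def by (metis image_iff transpose_involutory)
  have "nonneg ?X" using dominated_step_nonneg[OF dominated_step.transfer[OF ge gap] Y \<epsilon>] .
  then show "nonneg (empty_cups \<epsilon> (\<tau> ` E) ?X)" by (rule nonneg_empty_cups)
  show "empty_cups \<epsilon> (\<tau> ` E) ?X ! i \<le> empty_cups \<epsilon> E Y ! i"
    if "i < length (empty_cups \<epsilon> E Y)" "i \<noteq> g" "i \<noteq> e" for i
    using that ge mem[of i] by (simp add: nth_empty_cups nth_transfer_fill \<tau>_def)
  have "empty_cups \<epsilon> (\<tau> ` E) ?X ! g = (if e \<in> E then max 0 (Y ! g - real k * (1 + \<epsilon>) - (1 + \<epsilon>))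
      else Y ! g - real k * (1 + \<epsilon>))"
    "empty_cups \<epsilon> (\<tau> ` E) ?X ! e = (if g \<in> E then max 0 (Y ! e + real k * (1 + \<epsilon>) - (1 + \<epsilon>))
      else Y ! e + real k * (1 + \<epsilon>))"
    "empty_cups \<epsilon> E Y ! g = (if g \<in> E then max 0 (Y ! g - (1 + \<epsilon>)) else Y ! g)"
    "empty_cups \<epsilon> E Y ! e = (if e \<in> E then max 0 (Y ! e - (1 + \<epsilon>)) else Y ! e)"
    using ge mem[of g] mem[of e] by (simp_all add: nth_empty_cups nth_transfer_fill \<tau>_def)
  moreover have "0 \<le> Y ! e" using Y ge by simp
  ultimately show "two_cup_dominated (1 + \<epsilon>) (empty_cups \<epsilon> (\<tau> ` E) ?X ! g) (empty_cups \<epsilon> (\<tau> ` E) ?X ! e)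
      (empty_cups \<epsilon> E Y ! g) (empty_cups \<epsilon> E Y ! e)"
    using two_cup_dominated_transfer[OF _ k gap] \<epsilon> by simp
qed (use ge in simp_all)

lemma dominated_step_empty_cups:
  assumes "dominated_step \<epsilon> X Y" "nonneg Y" "0 \<le> \<epsilon>" "emptier_move p Y E'"
  shows "\<exists>E. emptier_move p X E \<and> dominated \<epsilon> (empty_cups \<epsilon> E X) (empty_cups \<epsilon> E' Y)"
  using assms
proof (induction rule: dominated_step.induct)
  case (entrywise_le X Y)
  have "list_all2 (\<lambda>x y. 0 \<le> x \<and> x \<le> y) (empty_cups \<epsilon> E' X) (empty_cups \<epsilon> E' Y)"
    using entrywise_le.hyps by (auto simp: list_all2_conv_all_nth nth_empty_cups)
  moreover have "emptier_move p X E'"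
    using entrywise_le emptier_move_cong_length[of X Y] by (auto dest: list_all2_lengthD)
  ultimately show ?case by (blast intro: dominated_step.entrywise_le)
next
  case (permute \<sigma> Y)
  have "emptier_move p (permute_list \<sigma> Y) (inv \<sigma> ` E')"
    using permute emptier_move_cong_length[of "permute_list \<sigma> Y" Y]
    by (simp add: emptier_move_image_permutes permutes_inv)
  moreover have "dominated_step \<epsilon> (empty_cups \<epsilon> (inv \<sigma> ` E') (permute_list \<sigma> Y)) (empty_cups \<epsilon> E' Y)"
    using permute.hyps dominated_step.permute[of \<sigma> "empty_cups \<epsilon> E' Y"]
    by (simp add: empty_cups_permute_list)
  ultimately show ?case by blast
next
  case (transfer g Y e k)
  show ?case
  proof (cases "k = 0")
    case True
    have "transfer_fill g e 0 Y = Y" by (simp add: transfer_fill_def)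
    then show ?thesis using True transfer.prems(3) by auto
  next
    case False
    let ?\<tau> = "Transposition.transpose g e"
    have "emptier_move p (transfer_fill g e (real k * (1 + \<epsilon>)) Y) (?\<tau> ` E')"
      using transfer emptier_move_cong_length[of "transfer_fill g e _ Y" Y]
      by (simp add: emptier_move_image_permutes permutes_swap_id)
    moreover have "1 \<le> k" using False by simp
    ultimately show ?thesis
      using transfer_fill_empty_cups[OF transfer.hyps(1-3) _ transfer.hyps(4) transfer.prems(1,2)] by blast
  qed
qed

section \<open>Monotonicity of OPT under dominance\<close>

lemma backlog_round_le:
  assumes "filler_move p S a" "nonneg S" "0 \<le> \<epsilon>"
  shows "backlog (empty_cups \<epsilon> E (fill S a)) \<le> backlog S + 1"
proof (cases "S = []")
  case False
  have la: "length a = length S" using assms(1) by (rule filler_move_length)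
  have "empty_cups \<epsilon> E (fill S a) ! i \<le> backlog S + 1" if "i < length S" for i
  proof -
    have "0 \<le> S ! i" using assms(2) nth_mem[OF that] by blast
    then show ?thesis using that assms(3) nth_le_backlog[OF that] filler_move_nth[OF assms(1) that]
      by (auto simp: nth_empty_cups nth_fill la)
  qed
  moreover have "empty_cups \<epsilon> E (fill S a) \<noteq> []"
    using False la by (metis length_0_conv length_empty_cups length_fill)
  ultimately show ?thesis using la by (intro backlog_le) simp_all
qed (simp add: fill_def empty_cups_def)

lemma INF_emptier_moves_le:
  "emptier_move p X E \<Longrightarrow> (INF E'\<in>{E'. emptier_move p X E'}. f E') \<le> (f E :: real)"
  by (rule cINF_lower[OF bdd_below_finite[OF finite_imageI[OF finite_emptier_moves]]]) simp

lemma INF_round_le_backlog_plus: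
  assumes bound: "\<And>X. length X = length S \<Longrightarrow> nonneg X \<Longrightarrow> OPT Ps \<epsilon> X t \<le> backlog X + t"
    and fm: "filler_move p S a" and S: "nonneg S" and \<epsilon>: "0 \<le> \<epsilon>"
  shows "(INF E\<in>{E. emptier_move p (fill S a) E}. OPT Ps \<epsilon> (empty_cups \<epsilon> E (fill S a)) t) \<le> backlog S + 1 + t"
proof -
  have la: "length a = length S" using fm by (rule filler_move_length)
  obtain E where E: "emptier_move p (fill S a) E"
    using emptier_move_exists filler_move_le_length[OF fm] la by (metis length_fill)
  let ?X = "empty_cups \<epsilon> E (fill S a)"
  have "(INF E\<in>{E. emptier_move p (fill S a) E}. OPT Ps \<epsilon> (empty_cups \<epsilon> E (fill S a)) t) \<le> OPT Ps \<epsilon> ?X t"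
    using E by (rule INF_emptier_moves_le)
  also have "\<dots> \<le> backlog ?X + t"
    using la nonneg_empty_cups[OF nonneg_fill[OF S fm]] by (intro bound) simp_all
  also have "\<dots> \<le> backlog S + 1 + t" using backlog_round_le[OF fm S \<epsilon>] by simp
  finally show ?thesis .
qed

lemma OPT_le_backlog_plus:
  assumes "p \<in> Ps" "p \<le> length S" "nonneg S" "0 \<le> \<epsilon>"
  shows "OPT Ps \<epsilon> S t \<le> backlog S + t"
  using assms(2,3)
proof (induction t arbitrary: S)
  case (Suc t)
  have "filler_move p S (replicate p 1 @ replicate (length S - p) 0)"
    using Suc.prems(1) by (auto simp: filler_move_def sum_list_replicate)
  then have nonempty: "{(q, a). q \<in> Ps \<and> filler_move q S a} \<noteq> {}" using assms(1) by blast
  show ?case unfolding OPT.simps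
  proof (rule cSUP_least[OF nonempty], clarsimp)
    fix q a assume "filler_move q S a"
    with Suc show "(INF E\<in>{E. emptier_move q (fill S a) E}. OPT Ps \<epsilon> (empty_cups \<epsilon> E (fill S a)) t)
        \<le> backlog S + (1 + real t)"
      using INF_round_le_backlog_plus[of S Ps \<epsilon> t q a] assms(4) by simp
  qed
qed simp

lemma OPT_Suc_mono:
  assumes len: "length L = length R" and R: "nonneg R" and \<epsilon>: "0 \<le> \<epsilon>"
    and sim: "\<And>p a. p \<in> Ps \<Longrightarrow> filler_move p L a \<Longrightarrow> \<exists>a'. filler_move p R a' \<and>
      (\<forall>E'. emptier_move p (fill R a') E' \<longrightarrow> (\<exists>E. emptier_move p (fill L a) E \<and>
         OPT Ps \<epsilon> (empty_cups \<epsilon> E (fill L a)) t \<le> OPT Ps \<epsilon> (empty_cups \<epsilon> E' (fill R a')) t))"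
  shows "OPT Ps \<epsilon> L (Suc t) \<le> OPT Ps \<epsilon> R (Suc t)"
proof -
  let ?moves = "\<lambda>S. {(p, a). p \<in> Ps \<and> filler_move p S a}"
  let ?value = "\<lambda>S pa. INF E\<in>{E. emptier_move (fst pa) (fill S (snd pa)) E}.
    OPT Ps \<epsilon> (empty_cups \<epsilon> E (fill S (snd pa))) t"
  have same_moves: "?moves L = ?moves R" using filler_move_cong_length[OF len] by simp
  show ?thesis
  proof (cases "?moves L = {}")
    case True
    moreover have "?moves R = {}" using True same_moves by simp
    ultimately show ?thesis unfolding OPT.simps by (simp only: image_empty order_refl)
  next
    case False
    then obtain p\<^sub>0 a\<^sub>0 where p\<^sub>0: "p\<^sub>0 \<in> Ps" "filler_move p\<^sub>0 R a\<^sub>0" using same_moves by auto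
    have bound: "OPT Ps \<epsilon> X t \<le> backlog X + t" if "length X = length R" "nonneg X" for X
      using p\<^sub>0 filler_move_le_length[OF p\<^sub>0(2)] that \<epsilon> by (intro OPT_le_backlog_plus) simp_all
    have "bdd_above (?value R ` ?moves R)"
      using INF_round_le_backlog_plus[OF bound _ R \<epsilon>] by (intro bdd_aboveI) auto
    moreover have "\<exists>pa'\<in>?moves R. ?value L pa \<le> ?value R pa'" if "pa \<in> ?moves L" for pa
    proof -
      obtain p a where pa: "pa = (p, a)" "p \<in> Ps" "filler_move p L a" using \<open>pa \<in> ?moves L\<close> by auto
      then obtain a' where a': "filler_move p R a'" and
        reply: "\<And>E'. emptier_move p (fill R a') E' \<Longrightarrow> \<exists>E. emptier_move p (fill L a) E \<and>
          OPT Ps \<epsilon> (empty_cups \<epsilon> E (fill L a)) t \<le> OPT Ps \<epsilon> (empty_cups \<epsilon> E' (fill R a')) t"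
        using sim by blast
      have "{E'. emptier_move p (fill R a') E'} \<noteq> {}"
        using emptier_move_exists filler_move_le_length[OF a'] filler_move_length[OF a'] by simp
      then have "?value L (p, a) \<le> ?value R (p, a')"
        using reply by (intro cINF_mono bdd_below_finite finite_imageI finite_emptier_moves) auto
      then show ?thesis using pa a' by blast
    qed
    ultimately show ?thesis unfolding OPT.simps by (rule cSUP_mono[OF False])
  qed
qed

lemma OPT_mono_dominated_step:
  assumes "dominated_step \<epsilon> L R" "nonneg R" "0 \<le> \<epsilon>"
  shows "OPT Ps \<epsilon> L t \<le> OPT Ps \<epsilon> R t"
  using assms(1,2)
proof (induction t arbitrary: L R)
  case 0
  then show ?case using backlog_mono_dominated_step assms(3) by simp
next
  case (Suc t)
  show ?case
  proof (rule OPT_Suc_mono[OF dominated_step_length[OF Suc.prems(1)] Suc.prems(2) assms(3)])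
    fix p a assume "filler_move p L a"
    then obtain a' where a': "filler_move p R a'" and step: "dominated_step \<epsilon> (fill L a) (fill R a')"
      using dominated_step_fill[OF Suc.prems(1)] by blast
    have R': "nonneg (fill R a')" using nonneg_fill[OF Suc.prems(2) a'] .
    have "\<exists>E. emptier_move p (fill L a) E \<and>
        OPT Ps \<epsilon> (empty_cups \<epsilon> E (fill L a)) t \<le> OPT Ps \<epsilon> (empty_cups \<epsilon> E' (fill R a')) t"
      if E': "emptier_move p (fill R a') E'" for E'
    proof -
      obtain E where "emptier_move p (fill L a) E"
        and "dominated \<epsilon> (empty_cups \<epsilon> E (fill L a)) (empty_cups \<epsilon> E' (fill R a'))"
        using dominated_step_empty_cups[OF step R' assms(3) E'] by blast
      moreover have "nonneg (empty_cups \<epsilon> E' (fill R a'))" using R' by (rule nonneg_empty_cups)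
      ultimately show ?thesis using mono_dominated_if_mono_dominated_step[where f = "\<lambda>S. OPT Ps \<epsilon> S t", OF Suc.IH _ _ assms(3)] by blast
    qed
    then show "\<exists>a'. filler_move p R a' \<and> (\<forall>E'. emptier_move p (fill R a') E' \<longrightarrow> (\<exists>E. emptier_move p (fill L a) E \<and>
        OPT Ps \<epsilon> (empty_cups \<epsilon> E (fill L a)) t \<le> OPT Ps \<epsilon> (empty_cups \<epsilon> E' (fill R a')) t))"
      using a' by blast
  qed
qed

theorem OPT_mono_dominated:
  "dominated \<epsilon> L R \<Longrightarrow> nonneg R \<Longrightarrow> 0 \<le> \<epsilon> \<Longrightarrow> OPT Ps \<epsilon> L t \<le> OPT Ps \<epsilon> R t"
  by (rule mono_dominated_if_mono_dominated_step[OF OPT_mono_dominated_step])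

section \<open>Optimality of the greedy emptier\<close>

lemma emptier_move_exchange:
  assumes "emptier_move p X E" "e \<in> E" "g < length X" "g \<notin> E"
  shows "emptier_move p X (insert g (E - {e}))"
proof -
  have "finite E" using assms(1) by (auto simp: emptier_move_def intro: finite_subset)
  moreover have "card E > 0" using calculation assms(2) card_gt_0_iff by blast
  ultimately show ?thesis using assms by (auto simp: emptier_move_def card_insert_if card_Diff_singleton)
qed

text \<open>A set of \<open>p\<close> cups of maximal total fill consists of \<open>p\<close> fullest cups.\<close>
lemma greedy_move_exists:
  assumes "p \<le> length X"
  shows "\<exists>G. greedy_move p X G"
proof -
  let ?moves = "{E. emptier_move p X E}"
  let ?total = "\<lambda>E. \<Sum>i\<in>E. X ! i"
  have fin: "finite (?total ` ?moves)" using finite_emptier_moves by blast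
  have "Max (?total ` ?moves) \<in> ?total ` ?moves"
    using fin emptier_move_exists[OF assms] by (intro Max_in) auto
  then obtain G where G: "emptier_move p X G" and "?total G = Max (?total ` ?moves)" by auto
  then have max: "?total E \<le> ?total G" if "emptier_move p X E" for E
    using fin that by simp
  have "X ! j \<le> X ! i" if "i \<in> G" "j < length X" "j \<notin> G" for i j
  proof -
    have "finite G" using G by (auto simp: emptier_move_def intro: finite_subset)
    have "emptier_move p X (insert j (G - {i}))" using G that by (rule emptier_move_exchange)
    then have "?total (insert j (G - {i})) \<le> ?total G" by (rule max)
    then show ?thesis using that \<open>finite G\<close> by (simp add: sum_diff1)
  qed
  then show ?thesis using G unfolding greedy_move_def by blast
qed

lemma dominated_exchange:
  assumes ge: "g < length X" "e < length X" and "g \<notin> E" "e \<in> E" "X ! e \<le> X ! g"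
    and X: "nonneg X" and \<epsilon>: "0 \<le> \<epsilon>"
  shows "dominated \<epsilon> (empty_cups \<epsilon> (insert g (E - {e})) X) (empty_cups \<epsilon> E X)"
proof (rule dominated_if_two_cup_dominated)
  show "g \<noteq> e" using assms by blast
  show "two_cup_dominated (1 + \<epsilon>) (empty_cups \<epsilon> (insert g (E - {e})) X ! g)
      (empty_cups \<epsilon> (insert g (E - {e})) X ! e) (empty_cups \<epsilon> E X ! g) (empty_cups \<epsilon> E X ! e)"
    using assms two_cup_dominated_exchange[of "1 + \<epsilon>" "X ! e" "X ! g"] by (auto simp: nth_empty_cups)
qed (use assms nonneg_empty_cups[OF X] in \<open>auto simp: nth_empty_cups\<close>)

lemma greedy_move_dominated:
  assumes G: "greedy_move p X G" and X: "nonneg X" and \<epsilon>: "0 \<le> \<epsilon>"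
  shows "emptier_move p X E \<Longrightarrow> dominated \<epsilon> (empty_cups \<epsilon> G X) (empty_cups \<epsilon> E X)"
proof (induction "card (E - G)" arbitrary: E rule: less_induct)
  case less
  have G': "emptier_move p X G" using G by (simp add: greedy_move_def)
  have fin: "finite E" "finite G" using less.prems G' by (auto simp: emptier_move_def intro: finite_subset)
  show ?case
  proof (cases "E \<subseteq> G")
    case True
    then have "E = G" using fin less.prems G' by (metis card_subset_eq emptier_move_def)
    then show ?thesis by simp
  next
    case False
    then obtain e where e: "e \<in> E" "e \<notin> G" by blast
    have "card (G - E) = card (E - G)" using fin less.prems G'
      by (simp add: card_Diff_subset_Int emptier_move_def Int_commute)
    moreover have "card (E - G) \<noteq> 0" using e fin by auto
    ultimately have "G - E \<noteq> {}" by force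
    then obtain g where g: "g \<in> G" "g \<notin> E" by blast
    have ge: "g < length X" "e < length X" using g e less.prems G' by (auto simp: emptier_move_def)
    have "X ! e \<le> X ! g" using G g e ge by (simp add: greedy_move_def)
    then have "dominated \<epsilon> (empty_cups \<epsilon> (insert g (E - {e})) X) (empty_cups \<epsilon> E X)"
      using dominated_exchange ge g e X \<epsilon> by blast
    moreover have "dominated \<epsilon> (empty_cups \<epsilon> G X) (empty_cups \<epsilon> (insert g (E - {e})) X)"
    proof (rule less.hyps)
      have "insert g (E - {e}) - G = (E - G) - {e}" using g by auto
      moreover have "card ((E - G) - {e}) < card (E - G)" using e fin by (intro card_Diff1_less) auto
      ultimately show "card (insert g (E - {e}) - G) < card (E - G)" by simp
      show "emptier_move p X (insert g (E - {e}))" using emptier_move_exchange less.prems e g ge by blast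
    qed
    ultimately show ?thesis by (rule rtranclp_trans[rotated])
  qed
qed

lemma INF_greedy_moves_eq_INF_emptier_moves:
  assumes "p \<le> length X" "nonneg X" "0 \<le> \<epsilon>"
  shows "(INF E\<in>{E. greedy_move p X E}. OPT Ps \<epsilon> (empty_cups \<epsilon> E X) t)
       = (INF E\<in>{E. emptier_move p X E}. OPT Ps \<epsilon> (empty_cups \<epsilon> E X) t)"
proof -
  obtain G where G: "greedy_move p X G" using greedy_move_exists[OF assms(1)] by blast
  have min: "OPT Ps \<epsilon> (empty_cups \<epsilon> G X) t \<le> OPT Ps \<epsilon> (empty_cups \<epsilon> E X) t" if "emptier_move p X E" for E
    using greedy_move_dominated[OF G assms(2,3) that] nonneg_empty_cups[OF assms(2)] assms(3)
    by (rule OPT_mono_dominated)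
  have "(INF E\<in>{E. greedy_move p X E}. OPT Ps \<epsilon> (empty_cups \<epsilon> E X) t) = OPT Ps \<epsilon> (empty_cups \<epsilon> G X) t"
    using G min by (intro cInf_eq_minimum) (auto simp: greedy_move_def)
  also have "\<dots> = (INF E\<in>{E. emptier_move p X E}. OPT Ps \<epsilon> (empty_cups \<epsilon> E X) t)"
    using G min by (intro cInf_eq_minimum[symmetric]) (auto simp: greedy_move_def)
  finally show ?thesis .
qed

theorem GREEDY_eq_OPT:
  assumes "nonneg S" "0 \<le> \<epsilon>"
  shows "GREEDY Ps \<epsilon> S t = OPT Ps \<epsilon> S t"
  using assms(1)
proof (induction t arbitrary: S)
  case (Suc t)
  have "(INF E\<in>{E. greedy_move p (fill S a) E}. GREEDY Ps \<epsilon> (empty_cups \<epsilon> E (fill S a)) t)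
      = (INF E\<in>{E. emptier_move p (fill S a) E}. OPT Ps \<epsilon> (empty_cups \<epsilon> E (fill S a)) t)"
    if "filler_move p S a" for p a
  proof -
    have X: "nonneg (fill S a)" using nonneg_fill[OF Suc.prems that] .
    then have "(INF E\<in>{E. greedy_move p (fill S a) E}. GREEDY Ps \<epsilon> (empty_cups \<epsilon> E (fill S a)) t)
        = (INF E\<in>{E. greedy_move p (fill S a) E}. OPT Ps \<epsilon> (empty_cups \<epsilon> E (fill S a)) t)"
      using Suc.IH nonneg_empty_cups by simp
    also have "\<dots> = (INF E\<in>{E. emptier_move p (fill S a) E}. OPT Ps \<epsilon> (empty_cups \<epsilon> E (fill S a)) t)"
      using filler_move_le_length[OF that] filler_move_length[OF that] X assms(2)
      by (intro INF_greedy_moves_eq_INF_emptier_moves) simp_all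
    finally show ?thesis .
  qed
  then show ?case by (auto intro: SUP_cong)
qed simp

theorem corollary4p5:
  fixes \<epsilon> :: real and n :: nat and Ps :: "nat set" and A :: "real list" and t :: nat
  assumes "\<epsilon> > 0"
    and "n \<ge> 1"
    and "(\<exists>p. 1 \<le> p \<and> p \<le> n \<and> Ps = {p}) \<or> Ps = {1..n}"
    and "length A = n"
    and "\<forall>x\<in>set A. 0 \<le> x"
  shows "GREEDY Ps \<epsilon> A t = OPT Ps \<epsilon> A t"
  using assms(1,5) by (intro GREEDY_eq_OPT) simp_all

end
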